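(* In the setting below, for every $t\in[0,T]$ the marginal distribution $p^{\star}_t$ at time $t$ of the CTMC with the optimal generator $Q^{\star}$ started from $p_{\lim}$ satisfies $$p^{\star}_t(x)\propto \exp(V_t(x)/\alpha)\,p^{\mathrm{pre}}_t(x),\qquad x\in\mathcal{X},$$ where $p^{\mathrm{pre}}_t$ is the time-$t$ marginal of the CTMC with generator $Q^{\mathrm{pre}}$ started from $p_{\lim}$. In particular (at $t=T$) $p^{\star}_T\propto\exp(r/\alpha)p^{\mathrm{pre}}_T$.
   Context: Setting: $\mathcal{X}$ is a finite set, $T>0$, $\alpha>0$, $r:\mathcal{X}\to\mathbb{R}$, and $Q^{\mathrm{pre}}(t)$ is a pretrained time-dependent CTMC generator. A CTMC generator is a family $Q(t)=(Q_{x,y}(t))$ with $Q_{x,y}(t)\ge0$ for $x\neq y$ (rate from $x$ to $y$) and $Q_{x,x}(t)=-\sum_{y\neq x}Q_{x,y}(t)$; marginals obey $\frac{dp_t(x)}{dt}=\sum_{y\neq x}Q_{y,x}(t)p_t(y)-\sum_{y\neq x}Q_{x,y}(t)p_t(x)$. The initial distribution $p_{\lim}$ is a Dirac mass at a fixed state. $P^{Q}$ is the path law of the CTMC with generator $Q$ started at $p_{\lim}$. $Q^{\star}$ is a maximizer over all generators (fully nonparametric class) of $$J(Q)=\mathbb{E}_{P^{Q}}[r(x_T)]-\alpha\,\mathbb{E}_{P^{Q}}\Big[\int_0^T\sum_{y\neq x_t}\Big\{Q^{\mathrm{pre}}_{x_t,y}(t)-Q_{x_t,y}(t)+Q_{x_t,y}(t)\log\frac{Q_{x_t,y}(t)}{Q^{\mathrm{pre}}_{x_t,y}(t)}\Big\}dt\Big].$$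 The optimal value function is $$V_t(x)=\mathbb{E}_{x_{t:T}\sim P^{Q^{\star}}}\Big[r(x_T)-\alpha\int_t^T\sum_{y\neq x_s}\Big\{Q^{\star}_{x_s,y}(s)-Q^{\mathrm{pre}}_{x_s,y}(s)+Q^{\star}_{x_s,y}(s)\log\frac{Q^{\star}_{x_s,y}(s)}{Q^{\mathrm{pre}}_{x_s,y}(s)}\Big\}ds\;\Big|\;x_t=x\Big].$$ Generators are assumed regular enough (e.g. continuous in $t$) that the Kolmogorov equations have unique solutions; $0\log(0/0)=0$. *)

theory Defs
  imports "HOL-Analysis.Analysis"
begin

text \<open>Time-dependent CTMC generators on a finite state type 'x:
  Q t x y is the rate from x to y at time t (x \<noteq> y).\<close>

definition dirac :: "'x \<Rightarrow> 'x \<Rightarrow> real" where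
  "dirac x y = (if y = x then 1 else 0)"

definition fwd_sol ::
  "(real \<Rightarrow> 'x::finite \<Rightarrow> 'x \<Rightarrow> real) \<Rightarrow> real \<Rightarrow> real \<Rightarrow> (real \<Rightarrow> 'x \<Rightarrow> real) \<Rightarrow> bool" where
  "fwd_sol Q T s p \<longleftrightarrow>
     (\<forall>t\<in>{s..T}. \<forall>x. ((\<lambda>u. p u x) has_real_derivative
        (\<Sum>y\<in>UNIV - {x}. Q t y x * p t y - Q t x y * p t x)) (at t within {s..T}))"

definition is_generator :: "(real \<Rightarrow> 'x::finite \<Rightarrow> 'x \<Rightarrow> real) \<Rightarrow> real \<Rightarrow> bool" where
  "is_generator Q T \<longleftrightarrow>
     (\<forall>t\<in>{0..T}. \<forall>x y. x \<noteq> y \<longrightarrow> 0 \<le> Q t x y) \<and>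
     (\<forall>t\<in>{0..T}. \<forall>x. Q t x x = - (\<Sum>y\<in>UNIV - {x}. Q t x y)) \<and>
     (\<forall>x y. continuous_on {0..T} (\<lambda>t. Q t x y)) \<and>
     (\<forall>s\<in>{0..T}. \<forall>x. \<exists>p. fwd_sol Q T s p \<and> p s = dirac x) \<and>
     (\<forall>s\<in>{0..T}. \<forall>p q. fwd_sol Q T s p \<and> fwd_sol Q T s q \<and> p s = q s
        \<longrightarrow> (\<forall>t\<in>{s..T}. p t = q t))"

definition trans_prob ::
  "(real \<Rightarrow> 'x::finite \<Rightarrow> 'x \<Rightarrow> real) \<Rightarrow> real \<Rightarrow> real \<Rightarrow> 'x \<Rightarrow> real \<Rightarrow> 'x \<Rightarrow> real" where
  "trans_prob Q T s x t y = (THE v. \<exists>p. fwd_sol Q T s p \<and> p s = dirac x \<and> p t y = v)"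

definition marginal ::
  "(real \<Rightarrow> 'x::finite \<Rightarrow> 'x \<Rightarrow> real) \<Rightarrow> real \<Rightarrow> 'x \<Rightarrow> real \<Rightarrow> 'x \<Rightarrow> real" where
  "marginal Q T x0 t y = trans_prob Q T 0 x0 t y"

text \<open>KL rate of Q relative to Qpre at state x (convention 0 log(0/0) = 0 is automatic).\<close>
definition kl_rate ::
  "(real \<Rightarrow> 'x::finite \<Rightarrow> 'x \<Rightarrow> real) \<Rightarrow> (real \<Rightarrow> 'x \<Rightarrow> 'x \<Rightarrow> real) \<Rightarrow> real \<Rightarrow> 'x \<Rightarrow> real" where
  "kl_rate Qpre Q t x =
     (\<Sum>y\<in>UNIV - {x}. Qpre t x y - Q t x y + Q t x y * ln (Q t x y / Qpre t x y))"

definition abs_cont ::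
  "(real \<Rightarrow> 'x \<Rightarrow> 'x \<Rightarrow> real) \<Rightarrow> (real \<Rightarrow> 'x \<Rightarrow> 'x \<Rightarrow> real) \<Rightarrow> real \<Rightarrow> bool" where
  "abs_cont Qpre Q T \<longleftrightarrow> (\<forall>t\<in>{0..T}. \<forall>x y. x \<noteq> y \<longrightarrow> Qpre t x y = 0 \<longrightarrow> Q t x y = 0)"

text \<open>Generators with finite objective (the others have J = -infinity).\<close>
definition admissible ::
  "(real \<Rightarrow> 'x::finite \<Rightarrow> 'x \<Rightarrow> real) \<Rightarrow> real \<Rightarrow> 'x \<Rightarrow> (real \<Rightarrow> 'x \<Rightarrow> 'x \<Rightarrow> real) \<Rightarrow> bool" where
  "admissible Qpre T x0 Q \<longleftrightarrow>
     is_generator Q T \<and> abs_cont Qpre Q T \<and>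
     set_integrable lborel {0..T} (\<lambda>t. \<Sum>x\<in>UNIV. marginal Q T x0 t x * kl_rate Qpre Q t x)"

text \<open>J(Q) = E[r(x_T)] - alpha * E[int_0^T KL-rate(t, x_t) dt], written via marginals (Fubini).\<close>
definition objective ::
  "('x::finite \<Rightarrow> real) \<Rightarrow> real \<Rightarrow> (real \<Rightarrow> 'x \<Rightarrow> 'x \<Rightarrow> real) \<Rightarrow> real \<Rightarrow> 'x
     \<Rightarrow> (real \<Rightarrow> 'x \<Rightarrow> 'x \<Rightarrow> real) \<Rightarrow> real" where
  "objective r \<alpha> Qpre T x0 Q =
     (\<Sum>x\<in>UNIV. marginal Q T x0 T x * r x)
     - \<alpha> * (LINT t:{0..T}|lborel. (\<Sum>x\<in>UNIV. marginal Q T x0 t x * kl_rate Qpre Q t x))"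

definition value_fn ::
  "('x::finite \<Rightarrow> real) \<Rightarrow> real \<Rightarrow> (real \<Rightarrow> 'x \<Rightarrow> 'x \<Rightarrow> real) \<Rightarrow> (real \<Rightarrow> 'x \<Rightarrow> 'x \<Rightarrow> real)
     \<Rightarrow> real \<Rightarrow> real \<Rightarrow> 'x \<Rightarrow> real" where
  "value_fn r \<alpha> Qpre Q T t x =
     (\<Sum>y\<in>UNIV. trans_prob Q T t x T y * r y)
     - \<alpha> * (LINT s:{t..T}|lborel. (\<Sum>y\<in>UNIV. trans_prob Q T t x s y * kl_rate Qpre Q s y))"

end

theory Submission
  imports Defs
begin

text \<open>Let \<open>phi t x = E[exp (r x\<^sub>T / \<alpha>) | x\<^sub>t = x]\<close> under \<open>Qpre\<close>. It is positive and solves the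
  backward Kolmogorov equation, so Doob's h-transform \<open>Qh t x y = Qpre t x y * phi t y / phi t x\<close>
  is a generator whose kernel is the pretrained kernel reweighted by \<open>phi t y / phi s x\<close>.
  For any admissible \<open>Q\<close> with marginals \<open>p\<close>, differentiating \<open>\<Sum>x. p t x * ln (phi t x)\<close> along the
  forward equation gives the verification identity
  \<open>J(Q) = \<alpha> ln (phi 0 x0) - \<alpha> \<integral>\<^sub>0\<^sup>T \<Sum>x. p t x * KL(Q \<parallel> Qh)(t, x) dt\<close>.
  Hence \<open>Qh\<close> attains the bound, and for an optimal \<open>Qstar\<close> the KL gap integrates to zero; through
  the Hellinger bound this forces \<open>Qstar = Qh\<close> on every edge leaving a state of positive mass.
  So the optimal marginal solves the forward equation of \<open>Qh\<close>, i.e.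
  \<open>pstar t = ppre t * phi t / phi 0 x0\<close> with \<open>ppre\<close> the pretrained marginal, and on its support the
  chain of \<open>Qstar\<close> is that of \<open>Qh\<close>, whose value function is \<open>\<alpha> ln phi\<close>.\<close>

lemma sum_offdiag_swap:
  fixes f :: "'x::finite \<Rightarrow> 'x \<Rightarrow> 'a::ab_group_add"
  shows "(\<Sum>y\<in>UNIV. \<Sum>z\<in>UNIV-{y}. f z y) = (\<Sum>y\<in>UNIV. \<Sum>z\<in>UNIV-{y}. f y z)"
proof -
  have "(\<Sum>y\<in>UNIV. \<Sum>z\<in>UNIV-{y}. f z y) = (\<Sum>y\<in>UNIV. \<Sum>z\<in>UNIV. f z y) - (\<Sum>y\<in>UNIV. f y y)"
    by (simp add: sum_diff1 sum_subtractf)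
  also have "\<dots> = (\<Sum>y\<in>UNIV. \<Sum>z\<in>UNIV. f y z) - (\<Sum>y\<in>UNIV. f y y)"
    by (subst sum.swap) simp
  also have "\<dots> = (\<Sum>y\<in>UNIV. \<Sum>z\<in>UNIV-{y}. f y z)"
    by (simp add: sum_diff1 sum_subtractf)
  finally show ?thesis .
qed

lemma dirac_commute: "dirac x y = dirac y x"
  by (simp add: dirac_def)

lemma sum_mult_dirac: "(\<Sum>w\<in>UNIV. c w * dirac (x::'x::finite) w) = (c x :: real)"
proof -
  have "(\<Sum>w\<in>UNIV. c w * dirac x w) = (\<Sum>w\<in>UNIV. if w = x then c w else 0)"
    by (intro sum.cong) (auto simp: dirac_def)
  then show ?thesis by simp
qed

lemma sum_dirac_mult: "(\<Sum>w\<in>UNIV. dirac (x::'x::finite) w * c w) = (c x :: real)"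
  using sum_mult_dirac[of c x] by (simp add: mult.commute)

lemma sum_dirac: "(\<Sum>w\<in>UNIV. dirac (x::'x::finite) w) = (1::real)"
  by (simp add: dirac_def)

lemma continuous_on_nonneg_at_first_zero:
  fixes f :: "real \<Rightarrow> real"
  assumes "continuous_on {s..T} f" "s < \<tau>" "\<tau> \<le> T" "\<And>u. s \<le> u \<Longrightarrow> u < \<tau> \<Longrightarrow> 0 < f u"
  shows "0 \<le> f \<tau>"
proof (rule tendsto_lowerbound)
  show "(f \<longlongrightarrow> f \<tau>) (at \<tau> within {s..<\<tau>})"
  proof (rule tendsto_within_subset)
    show "(f \<longlongrightarrow> f \<tau>) (at \<tau> within {s..T})"
      using assms(1-3) by (simp add: continuous_on_eq_continuous_within continuous_within)
  qed (use assms(3) in auto)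
  show "at \<tau> within {s..<\<tau>} \<noteq> bot"
    using assms(2) by (subst at_within_eq_bot_iff) simp
  show "\<forall>\<^sub>F u in at \<tau> within {s..<\<tau>}. 0 \<le> f u"
    unfolding eventually_at_filter
    by (rule always_eventually) (use assms(4) in \<open>fastforce intro: less_imp_le\<close>)
qed

lemma first_zero_of_continuous_family:
  fixes z :: "real \<Rightarrow> 'x::finite \<Rightarrow> real"
  assumes cont: "\<And>w. continuous_on {s..T} (\<lambda>u. z u w)" and pos: "\<And>w. 0 < z s w"
    and t: "t \<in> {s..T}" and zero: "z t y \<le> 0"
  obtains \<tau> y0 where "s < \<tau>" "\<tau> \<le> T" "z \<tau> y0 = 0" "\<And>w. 0 \<le> z \<tau> w"
    "\<And>u w. s \<le> u \<Longrightarrow> u < \<tau> \<Longrightarrow> 0 < z u w"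
proof -
  define S where "S = (\<Union>w. {s..T} \<inter> (\<lambda>u. z u w) -` {..0})"
  have "closed S" unfolding S_def
    by (intro closed_UN ballI continuous_closed_preimage cont closed_atLeastAtMost closed_atMost) auto
  moreover have "t \<in> S" "bdd_below S"
    using t zero by (auto simp: S_def bdd_below_def)
  ultimately have "Inf S \<in> S" by (intro closed_contains_Inf) auto
  then obtain y0 where y0: "z (Inf S) y0 \<le> 0" and I: "Inf S \<in> {s..T}" by (auto simp: S_def)
  have below: "0 < z u w" if "s \<le> u" "u < Inf S" for u w
  proof (rule ccontr)
    assume "\<not> 0 < z u w"
    then have "u \<in> {s..T} \<inter> (\<lambda>u. z u w) -` {..0}" using that I by auto
    then have "u \<in> S" unfolding S_def by blast
    then have "Inf S \<le> u" using \<open>bdd_below S\<close> by (rule cInf_lower)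
    then show False using that by simp
  qed
  have "s < Inf S" using I y0 pos[of y0] by (cases "Inf S = s") auto
  moreover have nonneg: "0 \<le> z (Inf S) w" for w
    using continuous_on_nonneg_at_first_zero[OF cont \<open>s < Inf S\<close>] I below by auto
  moreover have "z (Inf S) y0 = 0" using y0 nonneg[of y0] by simp
  ultimately show ?thesis using I below by (intro that[of "Inf S" y0]) auto
qed

lemma continuous_on_nonneg_integral_nonpos_imp_zero:
  fixes H :: "real \<Rightarrow> real"
  assumes cont: "continuous_on {a..b} H" and nonneg: "\<And>t. t \<in> {a..b} \<Longrightarrow> 0 \<le> H t"
    and int: "integral {a..b} H \<le> 0" and ab: "a < b" and t: "t \<in> {a..b}"
  shows "H t = 0"
proof -
  have "H integrable_on {a..b}" using cont by (rule integrable_continuous_real)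
  moreover have "0 \<le> integral {a..b} H" using calculation nonneg by (rule integral_nonneg)
  ultimately have "(H has_integral 0) (cbox a b)" using int integrable_integral[of H "{a..b}"] by simp
  then show ?thesis
    using cont nonneg ab t by (intro has_integral_0_cbox_imp_0[of a b H]) auto
qed

section \<open>Forward Kolmogorov equations\<close>

lemma fwd_sol_deriv:
  assumes "fwd_sol Q T s p" "t \<in> {s..T}"
  shows "((\<lambda>u. p u x) has_real_derivative
           (\<Sum>y\<in>UNIV - {x}. Q t y x * p t y - Q t x y * p t x)) (at t within {s..T})"
  using assms unfolding fwd_sol_def by blast

lemma fwd_sol_continuous:
  assumes "fwd_sol Q T s p"
  shows "continuous_on {s..T} (\<lambda>t. p t x)"
  by (rule DERIV_continuous_on[OF fwd_sol_deriv[OF assms]])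

lemma fwd_sol_cong:
  assumes "fwd_sol Q T s p" "\<And>t. t \<in> {s..T} \<Longrightarrow> q t = p t"
  shows "fwd_sol Q T s q"
  unfolding fwd_sol_def
proof (intro ballI allI)
  fix t x assume t: "t \<in> {s..T}"
  have "((\<lambda>u. p u x) has_real_derivative
          (\<Sum>y\<in>UNIV - {x}. Q t y x * q t y - Q t x y * q t x)) (at t within {s..T})"
    using fwd_sol_deriv[OF assms(1) t] assms(2)[OF t] by simp
  then show "((\<lambda>u. q u x) has_real_derivative
          (\<Sum>y\<in>UNIV - {x}. Q t y x * q t y - Q t x y * q t x)) (at t within {s..T})"
    by (rule has_field_derivative_transform_within[where d=1]) (use assms(2) t in auto)
qed

lemma fwd_sol_mono:
  assumes "fwd_sol Q T s p" "s \<le> s'"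
  shows "fwd_sol Q T s' p"
  unfolding fwd_sol_def
  by (intro ballI allI has_field_derivative_subset[OF fwd_sol_deriv[OF assms(1)]]) (use assms(2) in auto)

lemma fwd_sol_sum:
  assumes "finite I" "\<And>i. i \<in> I \<Longrightarrow> fwd_sol Q T s (P i)"
  shows "fwd_sol Q T s (\<lambda>t y. \<Sum>i\<in>I. c i * P i t y)"
  unfolding fwd_sol_def
proof (intro ballI allI)
  fix t x assume t: "t \<in> {s..T}"
  have "((\<lambda>u. \<Sum>i\<in>I. c i * P i u x) has_real_derivative
         (\<Sum>i\<in>I. c i * (\<Sum>y\<in>UNIV - {x}. Q t y x * P i t y - Q t x y * P i t x))) (at t within {s..T})"
    by (intro DERIV_sum DERIV_cmult fwd_sol_deriv[OF assms(2) t])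
  also have "(\<Sum>i\<in>I. c i * (\<Sum>y\<in>UNIV - {x}. Q t y x * P i t y - Q t x y * P i t x))
     = (\<Sum>y\<in>UNIV - {x}. Q t y x * (\<Sum>i\<in>I. c i * P i t y) - Q t x y * (\<Sum>i\<in>I. c i * P i t x))"
    unfolding sum_distrib_left
    by (subst sum.swap) (simp add: sum_subtractf right_diff_distrib sum_distrib_left mult.left_commute)
  finally show "((\<lambda>u. \<Sum>i\<in>I. c i * P i u x) has_real_derivative
      (\<Sum>y\<in>UNIV - {x}. Q t y x * (\<Sum>i\<in>I. c i * P i t y) - Q t x y * (\<Sum>i\<in>I. c i * P i t x)))
      (at t within {s..T})" .
qed

lemma fwd_sol_scale:
  assumes "fwd_sol Q T s p"
  shows "fwd_sol Q T s (\<lambda>t y. c * p t y)"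
  using fwd_sol_sum[of "{()}" Q T s "\<lambda>_. p" "\<lambda>_. c"] assms by simp

lemma fwd_sol_total_mass:
  assumes "fwd_sol Q T s p" "t \<in> {s..T}"
  shows "(\<Sum>y\<in>UNIV. p t y) = (\<Sum>y\<in>UNIV. p s y)"
proof -
  have "((\<lambda>u. \<Sum>y\<in>UNIV. p u y) has_real_derivative 0) (at u within {s..T})" if u: "u \<in> {s..T}" for u
  proof -
    have "((\<lambda>u. \<Sum>y\<in>UNIV. p u y) has_real_derivative
       (\<Sum>y\<in>UNIV. \<Sum>z\<in>UNIV - {y}. Q u z y * p u z - Q u y z * p u y)) (at u within {s..T})"
      by (intro DERIV_sum fwd_sol_deriv[OF assms(1) u])
    also have "(\<Sum>y\<in>UNIV. \<Sum>z\<in>UNIV - {y}. Q u z y * p u z - Q u y z * p u y) = 0"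
      using sum_offdiag_swap[of "\<lambda>z y. Q u z y * p u z"] by (simp add: sum_subtractf)
    finally show ?thesis .
  qed
  then obtain c where "\<forall>u\<in>{s..T}. (\<Sum>y\<in>UNIV. p u y) = c"
    using has_field_derivative_zero_constant[of "{s..T}"] by blast
  then show ?thesis using assms(2) by auto
qed

lemma fwd_sol_transfer:
  assumes "fwd_sol Q1 T s p"
    and "\<And>t x y. t \<in> {s..T} \<Longrightarrow> x \<noteq> y \<Longrightarrow> Q1 t x y * p t x = Q2 t x y * p t x"
  shows "fwd_sol Q2 T s p"
  unfolding fwd_sol_def
proof (intro ballI allI)
  fix t x assume t: "t \<in> {s..T}"
  have flux: "(\<Sum>y\<in>UNIV - {x}. Q1 t y x * p t y - Q1 t x y * p t x)
      = (\<Sum>y\<in>UNIV - {x}. Q2 t y x * p t y - Q2 t x y * p t x)"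
    by (intro sum.cong refl) (metis Diff_iff assms(2)[OF t] singletonI)
  show "((\<lambda>u. p u x) has_real_derivative
        (\<Sum>y\<in>UNIV - {x}. Q2 t y x * p t y - Q2 t x y * p t x)) (at t within {s..T})"
    unfolding flux[symmetric] by (rule fwd_sol_deriv[OF assms(1) t])
qed

lemma sum_flux_mult_eq:
  fixes Q :: "'x::finite \<Rightarrow> 'x \<Rightarrow> real"
  shows "(\<Sum>x\<in>UNIV. (\<Sum>y\<in>UNIV - {x}. Q y x * p y - Q x y * p x) * g x)
    = (\<Sum>x\<in>UNIV. p x * (\<Sum>y\<in>UNIV - {x}. Q x y * (g y - g x)))"
proof -
  have "(\<Sum>x\<in>UNIV. (\<Sum>y\<in>UNIV - {x}. Q y x * p y - Q x y * p x) * g x)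
      = (\<Sum>x\<in>UNIV. \<Sum>y\<in>UNIV - {x}. Q y x * p y * g x) - (\<Sum>x\<in>UNIV. \<Sum>y\<in>UNIV - {x}. Q x y * p x * g x)"
    by (simp add: sum_distrib_right left_diff_distrib sum_subtractf)
  also have "(\<Sum>x\<in>UNIV. \<Sum>y\<in>UNIV - {x}. Q y x * p y * g x) = (\<Sum>x\<in>UNIV. \<Sum>y\<in>UNIV - {x}. Q x y * p x * g y)"
    by (rule sum_offdiag_swap)
  finally show ?thesis
    by (simp add: sum_distrib_left right_diff_distrib sum_subtractf algebra_simps)
qed

section \<open>Relative entropy of jump rates\<close>

definition kl_term :: "real \<Rightarrow> real \<Rightarrow> real" where
  "kl_term a b = a - b + b * ln (b / a)"

lemma kl_rate_eq_sum_kl_term: "kl_rate Q1 Q2 t x = (\<Sum>y\<in>UNIV - {x}. kl_term (Q1 t x y) (Q2 t x y))"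
  unfolding kl_rate_def kl_term_def ..

lemma kl_term_self: "kl_term a a = 0"
  by (cases "a = 0") (simp_all add: kl_term_def)

lemma kl_term_change_of_reference:
  assumes "0 \<le> a" "0 \<le> b" "a = 0 \<longrightarrow> b = 0" "0 < u" "0 < v"
  shows "b * (ln v - ln u) - a * (v - u) / u = kl_term a b - kl_term (a * v / u) b"
proof (cases "b = 0")
  case True
  then show ?thesis using assms by (simp add: kl_term_def field_simps)
next
  case False
  then have "0 < a" "0 < b" using assms by auto
  then have "kl_term (a * v / u) b = a * v / u - b + b * (ln b - ln a - ln v + ln u)"
    and "kl_term a b = a - b + b * (ln b - ln a)"
    using assms by (simp_all add: kl_term_def ln_div ln_mult)
  then show ?thesis using assms by (simp only:) (simp add: field_simps)
qed

lemma kl_term_ge_hellinger: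
  assumes "0 \<le> a" "0 \<le> b" "a = 0 \<longrightarrow> b = 0"
  shows "(sqrt a - sqrt b)\<^sup>2 \<le> kl_term a b"
proof (cases "b = 0")
  case True
  then show ?thesis using assms by (simp add: kl_term_def)
next
  case False
  then have "0 < a" "0 < b" using assms by auto
  define sa sb where "sa = sqrt a" and "sb = sqrt b"
  have sa: "0 < sa" "a = sa * sa" and sb: "0 < sb" "b = sb * sb"
    using \<open>0 < a\<close> \<open>0 < b\<close> by (simp_all add: sa_def sb_def)
  have "ln (sa / sb) \<le> sa / sb - 1" using sa sb by (intro ln_le_minus_one) simp
  then have "sb * sb * (1 - sa / sb) \<le> sb * sb * (ln sb - ln sa)"
    using sa sb by (intro mult_left_mono) (auto simp: ln_div)
  moreover have "sb * sb * (1 - sa / sb) = sb * sb - sa * sb" using sb by (simp add: field_simps)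
  ultimately have "(sqrt a - sqrt b)\<^sup>2 \<le> sa * sa - sb * sb + 2 * (sb * sb * (ln sb - ln sa))"
    by (simp add: sa_def[symmetric] sb_def[symmetric] power2_eq_square algebra_simps)
  also have "\<dots> = kl_term a b"
  proof -
    have "ln (b / a) = 2 * (ln sb - ln sa)" using sa sb by (simp add: ln_div ln_mult)
    then show ?thesis unfolding kl_term_def by (simp add: sa(2) sb(2))
  qed
  finally show ?thesis .
qed

lemma kl_rate_self: "kl_rate Q Q t x = 0"
  by (simp add: kl_rate_eq_sum_kl_term kl_term_self)

lemma objective_eq_value_fn: "objective r \<alpha> Qpre T x0 Q = value_fn r \<alpha> Qpre Q T 0 x0"
  unfolding objective_def value_fn_def marginal_def ..

section \<open>Transition kernels and the backward equation\<close>

locale ctmc_generator =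
  fixes Q :: "real \<Rightarrow> 'x::finite \<Rightarrow> 'x \<Rightarrow> real" and T :: real
  assumes generator: "is_generator Q T"
begin

lemma rate_nonneg: "t \<in> {0..T} \<Longrightarrow> x \<noteq> y \<Longrightarrow> 0 \<le> Q t x y"
  using generator[unfolded is_generator_def, THEN conjunct1] by simp

lemma rate_diag: "t \<in> {0..T} \<Longrightarrow> Q t x x = - (\<Sum>y\<in>UNIV - {x}. Q t x y)"
  using generator[unfolded is_generator_def, THEN conjunct2, THEN conjunct1] by simp

lemma rate_continuous: "continuous_on {0..T} (\<lambda>t. Q t x y)"
  using generator[unfolded is_generator_def, THEN conjunct2, THEN conjunct2, THEN conjunct1] by simp

lemma fwd_sol_exists: "s \<in> {0..T} \<Longrightarrow> \<exists>p. fwd_sol Q T s p \<and> p s = dirac x"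
  using generator[unfolded is_generator_def, THEN conjunct2, THEN conjunct2, THEN conjunct2, THEN conjunct1]
  by simp

lemma fwd_sol_unique:
  "s \<in> {0..T} \<Longrightarrow> fwd_sol Q T s p \<Longrightarrow> fwd_sol Q T s q \<Longrightarrow> p s = q s \<Longrightarrow> t \<in> {s..T}
    \<Longrightarrow> p t = q t"
  using generator[unfolded is_generator_def, THEN conjunct2, THEN conjunct2, THEN conjunct2, THEN conjunct2]
  by blast

lemma flux_eq_sum_in_rates:
  assumes "t \<in> {0..T}"
  shows "(\<Sum>y\<in>UNIV - {x}. Q t y x * p y - Q t x y * p x) = (\<Sum>y\<in>UNIV. Q t y x * p y)"
proof -
  have "(\<Sum>y\<in>UNIV. Q t y x * p y) = (\<Sum>y\<in>UNIV-{x}. Q t y x * p y) + Q t x x * p x"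
    by (simp add: sum_diff1)
  also have "Q t x x * p x = - (\<Sum>y\<in>UNIV - {x}. Q t x y * p x)"
    using rate_diag[OF assms, of x] by (simp add: sum_distrib_right)
  finally show ?thesis by (simp add: sum_subtractf)
qed

lemma rates_bounded: "\<exists>B>0. \<forall>t\<in>{0..T}. \<forall>x y. \<bar>Q t x y\<bar> \<le> B"
proof -
  let ?F = "\<lambda>t. \<Sum>x\<in>UNIV. \<Sum>y\<in>UNIV. \<bar>Q t x y\<bar>"
  have "bounded (?F ` {0..T})"
    by (intro compact_imp_bounded compact_continuous_image compact_Icc continuous_intros rate_continuous)
  then obtain B where B: "B > 0" "\<And>t. t \<in> {0..T} \<Longrightarrow> norm (?F t) \<le> B"
    unfolding bounded_pos by blast
  have "\<bar>Q t x y\<bar> \<le> B" if "t \<in> {0..T}" for t x y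
  proof -
    have "\<bar>Q t x y\<bar> \<le> (\<Sum>y\<in>UNIV. \<bar>Q t x y\<bar>)" by (rule member_le_sum) auto
    also have "\<dots> \<le> ?F t" by (rule member_le_sum[where f="\<lambda>x. \<Sum>y\<in>UNIV. \<bar>Q t x y\<bar>"]) (auto intro: sum_nonneg)
    also have "\<dots> \<le> B" using B(2)[OF that] by simp
    finally show ?thesis .
  qed
  then show ?thesis using B(1) by blast
qed

definition rate_bound :: real where
  "rate_bound = (SOME B. B > 0 \<and> (\<forall>t\<in>{0..T}. \<forall>x y. \<bar>Q t x y\<bar> \<le> B))"

lemma rate_bound: "0 < rate_bound" "t \<in> {0..T} \<Longrightarrow> \<bar>Q t x y\<bar> \<le> rate_bound"
proof -
  have "0 < rate_bound \<and> (\<forall>t\<in>{0..T}. \<forall>x y. \<bar>Q t x y\<bar> \<le> rate_bound)"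
    unfolding rate_bound_def by (rule someI_ex[OF rates_bounded])
  then show "0 < rate_bound" "t \<in> {0..T} \<Longrightarrow> \<bar>Q t x y\<bar> \<le> rate_bound" by auto
qed

lemma flux_lower_bound_at_minimum:
  assumes t: "t \<in> {0..T}" and E: "0 \<le> E" and ge: "\<And>w. - E \<le> p w" and eq: "p y = - E"
  shows "- (real CARD('x) * rate_bound * E) \<le> (\<Sum>w\<in>UNIV - {y}. Q t w y * p w - Q t y w * p y)"
proof -
  have "- (rate_bound * E) \<le> Q t w y * p w - Q t y w * p y" if "w \<noteq> y" for w
  proof -
    have "- (rate_bound * E) \<le> Q t w y * (- E)"
      using rate_bound(2)[OF t, of w y] E by (simp add: mult_right_mono)
    also have "\<dots> \<le> Q t w y * p w" by (rule mult_left_mono[OF ge rate_nonneg[OF t that]])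
    finally show ?thesis using mult_nonneg_nonneg[OF rate_nonneg[OF t not_sym[OF that]] E] eq by simp
  qed
  then have "(\<Sum>w\<in>UNIV - {y}. - (rate_bound * E)) \<le> (\<Sum>w\<in>UNIV - {y}. Q t w y * p w - Q t y w * p y)"
    by (intro sum_mono) auto
  moreover have "real (card (UNIV - {y})) * (rate_bound * E) \<le> real CARD('x) * (rate_bound * E)"
    using rate_bound(1) E by (intro mult_right_mono) (auto simp: card_Diff_subset)
  ultimately show ?thesis by simp
qed

text \<open>If \<open>p\<close> became negative, the perturbation \<open>p + e exp (K (u - s))\<close>, with \<open>K\<close> exceeding
  every total exit rate, would reach zero at a first time at which its derivative is positive.\<close>
lemma fwd_sol_nonneg:
  assumes s: "s \<in> {0..T}" and p: "fwd_sol Q T s p" and p0: "\<And>w. 0 \<le> p s w" and t: "t \<in> {s..T}"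
  shows "0 \<le> p t y"
proof (rule ccontr)
  assume "\<not> 0 \<le> p t y"
  define K where "K = real CARD('x) * rate_bound + 1"
  define e where "e = - p t y * exp (- K * (t - s))"
  define z where "z u w = p u w + e * exp (K * (u - s))" for u w
  have e: "0 < e" using \<open>\<not> 0 \<le> p t y\<close> by (simp add: e_def mult_less_0_iff)
  have "z t y = 0" by (simp add: z_def e_def flip: exp_add)
  moreover have "continuous_on {s..T} (\<lambda>u. z u w)" for w
    unfolding z_def by (intro continuous_intros fwd_sol_continuous[OF p])
  moreover have "0 < z s w" for w using p0[of w] e by (simp add: z_def)
  ultimately obtain \<tau> y0 where \<tau>: "s < \<tau>" "\<tau> \<le> T" and y0: "z \<tau> y0 = 0"
    and ge: "\<And>w. 0 \<le> z \<tau> w" and before: "\<And>u w. s \<le> u \<Longrightarrow> u < \<tau> \<Longrightarrow> 0 < z u w"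
    using first_zero_of_continuous_family[of s T z t y] t by (metis order_refl)
  define E where "E = e * exp (K * (\<tau> - s))"
  have E: "0 \<le> E" using e by (simp add: E_def)
  have \<tau>I: "\<tau> \<in> {s..T}" "\<tau> \<in> {0..T}" using \<tau> s by auto
  have geE: "- E \<le> p \<tau> w" for w using ge[of w] by (simp add: z_def E_def)
  have eqE: "p \<tau> y0 = - E" using y0 by (simp add: z_def E_def)
  have "((\<lambda>u. z u y0) has_real_derivative
      (\<Sum>w\<in>UNIV - {y0}. Q \<tau> w y0 * p \<tau> w - Q \<tau> y0 w * p \<tau> y0) + K * E) (at \<tau> within {s..T})"
    unfolding z_def E_def
    by (intro DERIV_add fwd_sol_deriv[OF p \<tau>I(1)]) (auto intro!: derivative_eq_intros)
  moreover have "0 < (\<Sum>w\<in>UNIV - {y0}. Q \<tau> w y0 * p \<tau> w - Q \<tau> y0 w * p \<tau> y0) + K * E"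
  proof -
    have "- (real CARD('x) * rate_bound * E) \<le> (\<Sum>w\<in>UNIV - {y0}. Q \<tau> w y0 * p \<tau> w - Q \<tau> y0 w * p \<tau> y0)"
      by (rule flux_lower_bound_at_minimum[where p="p \<tau>", OF \<tau>I(2) E geE eqE])
    moreover have "0 < E" using e by (simp add: E_def)
    ultimately show ?thesis by (simp add: K_def algebra_simps)
  qed
  ultimately obtain d where d: "0 < d"
    "\<And>h. 0 < h \<Longrightarrow> \<tau> - h \<in> {s..T} \<Longrightarrow> h < d \<Longrightarrow> z (\<tau> - h) y0 < z \<tau> y0"
    using has_real_derivative_pos_inc_left by blast
  define h where "h = min (d / 2) (\<tau> - s)"
  have "z (\<tau> - h) y0 < 0" using d \<tau> y0 by (intro d(2)[of h, simplified y0]) (auto simp: h_def)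
  moreover have "0 < z (\<tau> - h) y0" using d \<tau> by (intro before) (auto simp: h_def)
  ultimately show False by simp
qed

lemma trans_prob_eq:
  assumes s: "s \<in> {0..T}" and p: "fwd_sol Q T s p" "p s = dirac x" and t: "t \<in> {s..T}"
  shows "trans_prob Q T s x t y = p t y"
  unfolding trans_prob_def
proof (rule the_equality)
  show "\<exists>q. fwd_sol Q T s q \<and> q s = dirac x \<and> q t y = p t y" using p by blast
next
  fix v assume "\<exists>q. fwd_sol Q T s q \<and> q s = dirac x \<and> q t y = v"
  then obtain q where q: "fwd_sol Q T s q" "q s = dirac x" "q t y = v" by blast
  have "q t = p t" by (rule fwd_sol_unique[OF s q(1) p(1)]) (use q(2) p(2) t in auto)
  then show "v = p t y" using q(3) by simp
qed

lemma
  assumes "s \<in> {0..T}"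
  shows trans_prob_fwd_sol: "fwd_sol Q T s (trans_prob Q T s x)"
    and trans_prob_initial: "trans_prob Q T s x s = dirac x"
proof -
  obtain p where p: "fwd_sol Q T s p" "p s = dirac x" using fwd_sol_exists[OF assms] by blast
  show "fwd_sol Q T s (trans_prob Q T s x)"
    by (rule fwd_sol_cong[OF p(1)]) (use trans_prob_eq[OF assms p] in auto)
  show "trans_prob Q T s x s = dirac x"
    using trans_prob_eq[OF assms p, of s] assms p(2) by auto
qed

lemma fwd_sol_superposition:
  assumes s: "s \<in> {0..T}" and p: "fwd_sol Q T s p" and t: "t \<in> {s..T}"
  shows "p t y = (\<Sum>x\<in>UNIV. p s x * trans_prob Q T s x t y)"
proof -
  have q: "fwd_sol Q T s (\<lambda>t y. \<Sum>x\<in>UNIV. p s x * trans_prob Q T s x t y)"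
    using fwd_sol_sum[where I=UNIV and P="trans_prob Q T s" and c="p s"] trans_prob_fwd_sol[OF s] by simp
  have q0: "(\<lambda>y. \<Sum>x\<in>UNIV. p s x * trans_prob Q T s x s y) = p s"
    unfolding trans_prob_initial[OF s] by (intro ext, subst dirac_commute) (rule sum_mult_dirac)
  have "p t = (\<lambda>y. \<Sum>x\<in>UNIV. p s x * trans_prob Q T s x t y)"
    using fwd_sol_unique[OF s p q q0[symmetric] t] by simp
  then show ?thesis by simp
qed

lemma chapman_kolmogorov:
  assumes s: "s \<in> {0..T}" and t: "t \<in> {s..T}" and u: "u \<in> {t..T}"
  shows "trans_prob Q T s x u y = (\<Sum>z\<in>UNIV. trans_prob Q T s x t z * trans_prob Q T t z u y)"
proof -
  have "t \<in> {0..T}" using s t by auto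
  moreover have "fwd_sol Q T t (trans_prob Q T s x)"
    using fwd_sol_mono[OF trans_prob_fwd_sol[OF s]] t by simp
  ultimately show ?thesis using u by (rule fwd_sol_superposition)
qed

lemma trans_prob_nonneg: "s \<in> {0..T} \<Longrightarrow> t \<in> {s..T} \<Longrightarrow> 0 \<le> trans_prob Q T s x t y"
  by (rule fwd_sol_nonneg[OF _ trans_prob_fwd_sol]) (auto simp: trans_prob_initial dirac_def)

lemma trans_prob_sum: "s \<in> {0..T} \<Longrightarrow> t \<in> {s..T} \<Longrightarrow> (\<Sum>y\<in>UNIV. trans_prob Q T s x t y) = 1"
  using fwd_sol_total_mass[OF trans_prob_fwd_sol] by (simp add: trans_prob_initial sum_dirac)

lemma trans_prob_le_one: "s \<in> {0..T} \<Longrightarrow> t \<in> {s..T} \<Longrightarrow> trans_prob Q T s x t y \<le> 1"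
  using member_le_sum[of y UNIV "trans_prob Q T s x t"] trans_prob_nonneg trans_prob_sum by simp

lemma flux_abs_le:
  assumes t: "t \<in> {0..T}" and p: "\<And>y. 0 \<le> p y" "\<And>y. p y \<le> 1"
  shows "\<bar>\<Sum>y\<in>UNIV - {z}. Q t y z * p y - Q t z y * p z\<bar> \<le> 2 * real CARD('x) * rate_bound"
proof -
  have "\<bar>Q t y z * p y - Q t z y * p z\<bar> \<le> 2 * rate_bound" for y
  proof -
    have "\<bar>Q t u v * p w\<bar> \<le> rate_bound" for u v w
      using mult_mono[OF rate_bound(2)[OF t, of u v] p(2)[of w]] p(1)[of w] rate_bound(1)
      by (simp add: abs_mult)
    from this[of y z y] this[of z y z] show ?thesis
      using abs_triangle_ineq4[of "Q t y z * p y" "Q t z y * p z"] by linarith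
  qed
  then have "\<bar>\<Sum>y\<in>UNIV - {z}. Q t y z * p y - Q t z y * p z\<bar> \<le> (\<Sum>y\<in>UNIV - {z}. 2 * rate_bound)"
    by (intro order_trans[OF sum_abs] sum_mono)
  also have "\<dots> \<le> 2 * real CARD('x) * rate_bound"
    using rate_bound(1) by (simp add: card_Diff_subset)
  finally show ?thesis .
qed

lemma trans_prob_lipschitz:
  assumes "0 \<le> a" "a \<le> u" "u \<le> T"
  shows "\<bar>trans_prob Q T a x u z - dirac x z\<bar> \<le> 2 * real CARD('x) * rate_bound * (u - a)"
proof -
  have a: "a \<in> {0..T}" using assms by auto
  have "norm (trans_prob Q T a x u z - trans_prob Q T a x a z) \<le> 2 * real CARD('x) * rate_bound * norm (u - a)"
  proof (rule field_differentiable_bound[OF convex_real_interval(5)])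
    fix v assume v: "v \<in> {a..u}"
    then have va: "v \<in> {a..T}" and v0: "v \<in> {0..T}" using assms by auto
    show "((\<lambda>v. trans_prob Q T a x v z) has_real_derivative
        (\<Sum>y\<in>UNIV - {z}. Q v y z * trans_prob Q T a x v y - Q v z y * trans_prob Q T a x v z)) (at v within {a..u})"
      by (rule has_field_derivative_subset[OF fwd_sol_deriv[OF trans_prob_fwd_sol[OF a] va]]) (use assms in auto)
    show "norm (\<Sum>y\<in>UNIV - {z}. Q v y z * trans_prob Q T a x v y - Q v z y * trans_prob Q T a x v z)
        \<le> 2 * real CARD('x) * rate_bound"
      unfolding real_norm_def
      by (rule flux_abs_le[OF v0 trans_prob_nonneg[OF a va] trans_prob_le_one[OF a va]])
  qed (use assms in auto)
  then show ?thesis using trans_prob_initial[OF a] assms by simp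
qed

lemma trans_prob_flux_near_rate:
  assumes "0 \<le> a" "a \<le> v" "v \<le> b" "b \<le> T"
  shows "\<bar>(\<Sum>y\<in>UNIV - {z}. Q v y z * trans_prob Q T a x v y - Q v z y * trans_prob Q T a x v z) - Q v x z\<bar>
    \<le> 2 * real CARD('x)^2 * rate_bound^2 * (b - a)"
proof -
  have v0: "v \<in> {0..T}" using assms by auto
  have "(\<Sum>y\<in>UNIV - {z}. Q v y z * trans_prob Q T a x v y - Q v z y * trans_prob Q T a x v z) - Q v x z
      = (\<Sum>y\<in>UNIV. Q v y z * (trans_prob Q T a x v y - dirac x y))"
    using flux_eq_sum_in_rates[OF v0, of z "trans_prob Q T a x v"] sum_mult_dirac[of "\<lambda>y. Q v y z" x]
    by (simp add: right_diff_distrib sum_subtractf)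
  also have "\<bar>\<dots>\<bar> \<le> (\<Sum>y\<in>(UNIV::'x set). rate_bound * (2 * real CARD('x) * rate_bound * (b - a)))"
  proof (intro order_trans[OF sum_abs] sum_mono, unfold abs_mult)
    fix y
    have "\<bar>trans_prob Q T a x v y - dirac x y\<bar> \<le> 2 * real CARD('x) * rate_bound * (b - a)"
      using trans_prob_lipschitz[of a v x y] assms rate_bound(1) by (auto intro: order_trans)
    then show "\<bar>Q v y z\<bar> * \<bar>trans_prob Q T a x v y - dirac x y\<bar>
        \<le> rate_bound * (2 * real CARD('x) * rate_bound * (b - a))"
      by (rule mult_mono[OF rate_bound(2)[OF v0]]) (use rate_bound(1) in auto)
  qed
  finally show ?thesis by (simp add: power2_eq_square algebra_simps)
qed

lemma trans_prob_first_order: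
  assumes ab: "0 \<le> a" "a \<le> b" "b \<le> T"
    and close: "\<And>v x z. v \<in> {a..b} \<Longrightarrow> \<bar>Q v x z - Q t0 x z\<bar> \<le> \<eta>"
  shows "\<bar>trans_prob Q T a x b z - dirac x z - (b - a) * Q t0 x z\<bar>
    \<le> (2 * real CARD('x)^2 * rate_bound^2 * (b - a) + \<eta>) * (b - a)"
proof -
  define C where "C = 2 * real CARD('x)^2 * rate_bound^2"
  have a: "a \<in> {0..T}" using ab by auto
  have "norm ((trans_prob Q T a x b z - (b - a) * Q t0 x z) - (trans_prob Q T a x a z - (a - a) * Q t0 x z))
      \<le> (C * (b - a) + \<eta>) * norm (b - a)"
  proof (rule field_differentiable_bound[OF convex_real_interval(5)])
    fix v assume v: "v \<in> {a..b}"
    then have va: "v \<in> {a..T}" using ab by auto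
    show "((\<lambda>v. trans_prob Q T a x v z - (v - a) * Q t0 x z) has_real_derivative
        (\<Sum>y\<in>UNIV - {z}. Q v y z * trans_prob Q T a x v y - Q v z y * trans_prob Q T a x v z) - Q t0 x z)
        (at v within {a..b})"
      by (intro DERIV_diff has_field_derivative_subset[OF fwd_sol_deriv[OF trans_prob_fwd_sol[OF a] va]])
         (auto intro!: derivative_eq_intros simp: ab)
    show "norm ((\<Sum>y\<in>UNIV - {z}. Q v y z * trans_prob Q T a x v y - Q v z y * trans_prob Q T a x v z)
        - Q t0 x z) \<le> C * (b - a) + \<eta>"
      using trans_prob_flux_near_rate[where a=a and v=v and b=b and x=x and z=z] close[OF v, of x z] v ab
      unfolding C_def by simp
  qed (use ab in auto)
  then show ?thesis using trans_prob_initial[OF a] ab by (simp add: C_def)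
qed

definition cond_exp :: "('x \<Rightarrow> real) \<Rightarrow> real \<Rightarrow> 'x \<Rightarrow> real" where
  "cond_exp f t x = (\<Sum>y\<in>UNIV. trans_prob Q T t x T y * f y)"

lemma cond_exp_terminal: "0 \<le> T \<Longrightarrow> cond_exp f T x = f x"
  unfolding cond_exp_def by (simp add: trans_prob_initial sum_dirac_mult)

lemma cond_exp_chapman_kolmogorov:
  assumes "a \<in> {0..T}" "b \<in> {a..T}"
  shows "cond_exp f a x = (\<Sum>z\<in>UNIV. trans_prob Q T a x b z * cond_exp f b z)"
proof -
  have "cond_exp f a x = (\<Sum>y\<in>UNIV. (\<Sum>z\<in>UNIV. trans_prob Q T a x b z * trans_prob Q T b z T y) * f y)"
    unfolding cond_exp_def using chapman_kolmogorov[OF assms, of T] assms by simp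
  also have "\<dots> = (\<Sum>z\<in>UNIV. trans_prob Q T a x b z * cond_exp f b z)"
    unfolding cond_exp_def sum_distrib_right sum_distrib_left
    by (subst sum.swap) (simp add: mult.assoc)
  finally show ?thesis .
qed

lemma cond_exp_abs_le: "t \<in> {0..T} \<Longrightarrow> \<bar>cond_exp f t x\<bar> \<le> (\<Sum>y\<in>UNIV. \<bar>f y\<bar>)"
  unfolding cond_exp_def
  by (intro order_trans[OF sum_abs] sum_mono)
     (simp add: abs_mult mult_left_le_one_le trans_prob_nonneg trans_prob_le_one)

lemma cond_exp_increment:
  assumes "0 \<le> a" "a \<le> b" "b \<le> T"
  shows "cond_exp f a x - cond_exp f b x = (\<Sum>z\<in>UNIV. (trans_prob Q T a x b z - dirac x z) * cond_exp f b z)"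
  using cond_exp_chapman_kolmogorov[of a b f x] assms
  by (simp add: left_diff_distrib sum_subtractf sum_dirac_mult)

lemma cond_exp_lipschitz:
  "(2 * real CARD('x)^2 * rate_bound * (\<Sum>y\<in>UNIV. \<bar>f y\<bar>))-lipschitz_on {0..T} (\<lambda>t. cond_exp f t x)"
proof -
  define C where "C = 2 * real CARD('x)^2 * rate_bound * (\<Sum>y\<in>UNIV. \<bar>f y\<bar>)"
  have le: "\<bar>cond_exp f a x - cond_exp f b x\<bar> \<le> C * (b - a)" if "0 \<le> a" "a \<le> b" "b \<le> T" for a b
  proof -
    have "\<bar>cond_exp f a x - cond_exp f b x\<bar>
        \<le> (\<Sum>z\<in>(UNIV::'x set). 2 * real CARD('x) * rate_bound * (b - a) * (\<Sum>y\<in>UNIV. \<bar>f y\<bar>))"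
      unfolding cond_exp_increment[OF that]
      by (intro order_trans[OF sum_abs] sum_mono, unfold abs_mult,
          intro mult_mono trans_prob_lipschitz cond_exp_abs_le) (use that rate_bound(1) in auto)
    then show ?thesis by (simp add: C_def power2_eq_square algebra_simps)
  qed
  show ?thesis
    unfolding C_def[symmetric]
  proof (rule lipschitz_onI)
    fix a b assume "a \<in> {0..T}" "b \<in> {0..T}"
    then show "dist (cond_exp f a x) (cond_exp f b x) \<le> C * dist a b"
      using le[of a b] le[of b a] by (cases "a \<le> b") (auto simp: dist_real_def abs_minus_commute)
  next
    show "0 \<le> C" unfolding C_def using rate_bound(1) by (simp add: sum_nonneg)
  qed
qed

lemma cond_exp_continuous: "continuous_on {0..T} (\<lambda>t. cond_exp f t x)"
  by (rule lipschitz_on_continuous_on[OF cond_exp_lipschitz])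

lemma rates_eventually_close:
  assumes "t0 \<in> {0..T}" "0 < \<eta>"
  shows "\<forall>\<^sub>F u in at t0 within {0..T}. \<forall>x z. \<bar>Q u x z - Q t0 x z\<bar> < \<eta>"
proof (intro eventually_all_finite allI)
  fix x z
  have "((\<lambda>u. Q u x z) \<longlongrightarrow> Q t0 x z) (at t0 within {0..T})"
    using rate_continuous[of x z] assms(1) by (simp add: continuous_on_eq_continuous_within continuous_within)
  then show "\<forall>\<^sub>F u in at t0 within {0..T}. \<bar>Q u x z - Q t0 x z\<bar> < \<eta>"
    using assms(2) by (auto dest: tendstoD simp: dist_real_def)
qed

lemma trans_prob_difference_quotient:
  assumes t0: "t0 \<in> {0..T}"
  shows "((\<lambda>t. (trans_prob Q T (min t t0) x (max t t0) z - dirac x z) / \<bar>t - t0\<bar>) \<longlongrightarrow> Q t0 x z)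
    (at t0 within {0..T})"
proof (rule tendstoI)
  fix e :: real assume e: "0 < e"
  define C where "C = 2 * real CARD('x)^2 * rate_bound^2"
  have C: "0 \<le> C" by (simp add: C_def)
  obtain d where d: "0 < d"
    and close: "\<And>u. u \<in> {0..T} \<Longrightarrow> u \<noteq> t0 \<Longrightarrow> dist u t0 < d
      \<Longrightarrow> \<forall>x z. \<bar>Q u x z - Q t0 x z\<bar> < e / 2"
    using rates_eventually_close[OF t0, of "e / 2"] e unfolding eventually_at by auto
  show "\<forall>\<^sub>F t in at t0 within {0..T}.
      dist ((trans_prob Q T (min t t0) x (max t t0) z - dirac x z) / \<bar>t - t0\<bar>) (Q t0 x z) < e"
    unfolding eventually_at
  proof (intro exI[of _ "min d (e / (2 * (C + 1)))"] conjI ballI impI)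
    show "0 < min d (e / (2 * (C + 1)))" using d e C by simp
    fix t assume t: "t \<in> {0..T}" and near: "t \<noteq> t0 \<and> dist t t0 < min d (e / (2 * (C + 1)))"
    define a b where "a = min t t0" and "b = max t t0"
    have ab: "0 \<le> a" "a \<le> b" "b \<le> T" "b - a = \<bar>t - t0\<bar>" "0 < b - a"
      using t t0 near by (auto simp: a_def b_def)
    have "\<bar>Q v x' z' - Q t0 x' z'\<bar> \<le> e / 2" if "v \<in> {a..b}" for v x' z'
    proof (cases "v = t0")
      case False
      have "v \<in> {0..T}" "dist v t0 < d" using that t t0 near by (auto simp: a_def b_def dist_real_def)
      from close[OF this(1) False this(2)] show ?thesis by (meson less_imp_le)
    qed (use e in simp)
    then have "\<bar>trans_prob Q T a x b z - dirac x z - (b - a) * Q t0 x z\<bar> \<le> (C * (b - a) + e / 2) * (b - a)"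
      unfolding C_def by (rule trans_prob_first_order[OF ab(1-3)])
    then have "\<bar>(trans_prob Q T a x b z - dirac x z) / (b - a) - Q t0 x z\<bar> \<le> C * (b - a) + e / 2"
      using ab(5) by (simp add: field_simps abs_div_pos[symmetric] del: abs_div_pos)
    moreover have "C * (b - a) < e / 2"
    proof -
      have "C * (b - a) \<le> C * (e / (2 * (C + 1)))" using near ab(4) C by (intro mult_left_mono) (auto simp: dist_real_def)
      also have "\<dots> < e / 2" using C e by (simp add: field_simps)
      finally show ?thesis .
    qed
    ultimately show "dist ((trans_prob Q T (min t t0) x (max t t0) z - dirac x z) / \<bar>t - t0\<bar>) (Q t0 x z) < e"
      by (simp add: dist_real_def a_def b_def flip: ab(4))
  qed
qed

lemma cond_exp_has_derivative:
  assumes t0: "t0 \<in> {0..T}"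
  shows "((\<lambda>t. cond_exp f t x) has_real_derivative - (\<Sum>z\<in>UNIV. Q t0 x z * cond_exp f t0 z))
    (at t0 within {0..T})"
proof -
  define q where "q t z = (trans_prob Q T (min t t0) x (max t t0) z - dirac x z) / \<bar>t - t0\<bar>" for t z
  have quotient: "(cond_exp f t x - cond_exp f t0 x) / (t - t0) = - (\<Sum>z\<in>UNIV. q t z * cond_exp f (max t t0) z)"
    if "t \<in> {0..T}" "t \<noteq> t0" for t
  proof (cases "t < t0")
    case True
    then show ?thesis
      using cond_exp_increment[of t t0 f x] that t0
      by (simp add: q_def sum_divide_distrib[symmetric] field_simps)
  next
    case False
    then show ?thesis
      using cond_exp_increment[of t0 t f x] that t0
      by (simp add: q_def sum_divide_distrib[symmetric] field_simps)
  qed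
  have "continuous_on {0..T} (\<lambda>t. cond_exp f (max t t0) z)" for z
    by (rule continuous_on_compose2[OF cond_exp_continuous continuous_on_max[OF continuous_on_id continuous_on_const]])
       (use t0 in auto)
  then have "((\<lambda>t. cond_exp f (max t t0) z) \<longlongrightarrow> cond_exp f (max t0 t0) z) (at t0 within {0..T})" for z
    using t0 unfolding continuous_on_def by blast
  then have "((\<lambda>t. - (\<Sum>z\<in>UNIV. q t z * cond_exp f (max t t0) z))
      \<longlongrightarrow> - (\<Sum>z\<in>UNIV. Q t0 x z * cond_exp f t0 z)) (at t0 within {0..T})"
    unfolding q_def by (intro tendsto_intros trans_prob_difference_quotient[OF t0]) simp
  moreover have "\<forall>\<^sub>F t in at t0 within {0..T}.
      - (\<Sum>z\<in>UNIV. q t z * cond_exp f (max t t0) z) = (cond_exp f t x - cond_exp f t0 x) / (t - t0)"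
    unfolding eventually_at_filter by (rule always_eventually) (simp add: quotient)
  ultimately show ?thesis
    unfolding has_field_derivative_iff by (rule Lim_transform_eventually)
qed

end

section \<open>The h-transform and the verification identity\<close>

locale kl_control = pre: ctmc_generator Qpre T for Qpre :: "real \<Rightarrow> 'x::finite \<Rightarrow> 'x \<Rightarrow> real" and T +
  fixes \<alpha> :: real and r :: "'x \<Rightarrow> real"
  assumes T_pos: "0 < T" and \<alpha>_pos: "0 < \<alpha>"
begin

definition phi :: "real \<Rightarrow> 'x \<Rightarrow> real" where
  "phi = pre.cond_exp (\<lambda>y. exp (r y / \<alpha>))"

lemma phi_pos:
  assumes t: "t \<in> {0..T}"
  shows "0 < phi t x"
proof -
  have T: "T \<in> {t..T}" using t by auto
  obtain y where "trans_prob Qpre T t x T y \<noteq> 0"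
    using pre.trans_prob_sum[OF t T, of x] by force
  then have "0 < trans_prob Qpre T t x T y" using pre.trans_prob_nonneg[OF t T] by (simp add: order_le_neq_trans)
  then show ?thesis
    unfolding phi_def pre.cond_exp_def
    by (intro sum_pos2[where i=y]) (auto intro!: mult_nonneg_nonneg pre.trans_prob_nonneg[OF t T])
qed

lemma phi_terminal: "phi T x = exp (r x / \<alpha>)"
  unfolding phi_def using pre.cond_exp_terminal T_pos by simp

lemma phi_has_derivative:
  assumes "s \<in> {0..T}" "t \<in> {s..T}"
  shows "((\<lambda>t. phi t x) has_real_derivative - (\<Sum>y\<in>UNIV - {x}. Qpre t x y * (phi t y - phi t x)))
    (at t within {s..T})"
proof -
  have t: "t \<in> {0..T}" using assms by auto
  have "(\<Sum>z\<in>UNIV. Qpre t x z * phi t z) = (\<Sum>y\<in>UNIV - {x}. Qpre t x y * (phi t y - phi t x))"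
    using pre.flux_eq_sum_in_rates[OF t, of x]
    by (simp add: sum.remove[of UNIV x] pre.rate_diag[OF t] sum_distrib_right right_diff_distrib sum_subtractf)
  then show ?thesis
    using pre.cond_exp_has_derivative[OF t, of "\<lambda>y. exp (r y / \<alpha>)" x] assms
    unfolding phi_def by (auto intro: has_field_derivative_subset)
qed

lemma phi_continuous: "continuous_on {0..T} (\<lambda>t. phi t x)"
  unfolding phi_def by (rule pre.cond_exp_continuous)

text \<open>Doob's h-transform of \<open>Qpre\<close> by the space-time harmonic function \<open>phi\<close>.\<close>
definition Qh :: "real \<Rightarrow> 'x \<Rightarrow> 'x \<Rightarrow> real" where
  "Qh t x y = (if x = y then - (\<Sum>z\<in>UNIV - {x}. Qpre t x z * phi t z / phi t x)
               else Qpre t x y * phi t y / phi t x)"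

lemma flux_Qh:
  assumes t: "t \<in> {0..T}"
  shows "(\<Sum>z\<in>UNIV - {y}. Qh t z y * (u z * phi t z) - Qh t y z * (u y * phi t y))
    = (\<Sum>z\<in>UNIV - {y}. Qpre t z y * u z - Qpre t y z * u y) * phi t y
      - (\<Sum>z\<in>UNIV - {y}. Qpre t y z * (phi t z - phi t y)) * u y"
proof -
  have "Qh t z y * (u z * phi t z) - Qh t y z * (u y * phi t y)
      = (Qpre t z y * u z - Qpre t y z * u y) * phi t y - Qpre t y z * (phi t z - phi t y) * u y"
    if "z \<noteq> y" for z
    using that phi_pos[OF t, of z] phi_pos[OF t, of y] by (simp add: Qh_def field_simps)
  then show ?thesis
    by (simp add: sum_distrib_right sum_subtractf[symmetric])
qed

lemma fwd_sol_Qh_mult_phi: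
  assumes s: "s \<in> {0..T}" and u: "fwd_sol Qpre T s u"
  shows "fwd_sol Qh T s (\<lambda>t y. u t y * phi t y)"
  unfolding fwd_sol_def
proof (intro ballI allI)
  fix t y assume t: "t \<in> {s..T}"
  then have "t \<in> {0..T}" using s by auto
  from DERIV_mult[OF fwd_sol_deriv[OF u t] phi_has_derivative[OF s t], of y]
  show "((\<lambda>t. u t y * phi t y) has_real_derivative
      (\<Sum>z\<in>UNIV - {y}. Qh t z y * (u t z * phi t z) - Qh t y z * (u t y * phi t y))) (at t within {s..T})"
    unfolding flux_Qh[OF \<open>t \<in> {0..T}\<close>] by simp
qed

lemma fwd_sol_pre_div_phi:
  assumes s: "s \<in> {0..T}" and p: "fwd_sol Qh T s p"
  shows "fwd_sol Qpre T s (\<lambda>t y. p t y / phi t y)"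
  unfolding fwd_sol_def
proof (intro ballI allI)
  fix t y assume t: "t \<in> {s..T}"
  then have t0: "t \<in> {0..T}" using s by auto
  have ph: "0 < phi t z" for z using phi_pos[OF t0] .
  have flux: "(\<Sum>z\<in>UNIV - {y}. Qh t z y * p t z - Qh t y z * p t y)
      = (\<Sum>z\<in>UNIV - {y}. Qpre t z y * (p t z / phi t z) - Qpre t y z * (p t y / phi t y)) * phi t y
        - (\<Sum>z\<in>UNIV - {y}. Qpre t y z * (phi t z - phi t y)) * (p t y / phi t y)"
    using flux_Qh[OF t0, of y "\<lambda>z. p t z / phi t z"] ph by (simp add: less_imp_neq[THEN not_sym])
  have "((\<lambda>t. p t y / phi t y) has_real_derivative
      ((\<Sum>z\<in>UNIV - {y}. Qh t z y * p t z - Qh t y z * p t y) * phi t y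
        - p t y * - (\<Sum>z\<in>UNIV - {y}. Qpre t y z * (phi t z - phi t y))) / (phi t y * phi t y))
      (at t within {s..T})"
    using DERIV_divide[OF fwd_sol_deriv[OF p t] phi_has_derivative[OF s t]] ph[of y] by simp
  then show "((\<lambda>t. p t y / phi t y) has_real_derivative
      (\<Sum>z\<in>UNIV - {y}. Qpre t z y * (p t z / phi t z) - Qpre t y z * (p t y / phi t y))) (at t within {s..T})"
  proof (rule DERIV_cong)
    have "(F * c - a * - S) / (c * c) = X" if "F = X * c - S * (a / c)" "0 < c" for F X S a c :: real
      using that by (simp add: field_simps)
    from this[OF flux ph] show "((\<Sum>z\<in>UNIV - {y}. Qh t z y * p t z - Qh t y z * p t y) * phi t y
        - p t y * - (\<Sum>z\<in>UNIV - {y}. Qpre t y z * (phi t z - phi t y))) / (phi t y * phi t y)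
      = (\<Sum>z\<in>UNIV - {y}. Qpre t z y * (p t z / phi t z) - Qpre t y z * (p t y / phi t y))" .
  qed
qed

lemma fwd_sol_Qh_kernel:
  assumes s: "s \<in> {0..T}"
  shows "fwd_sol Qh T s (\<lambda>t y. trans_prob Qpre T s x t y * phi t y / phi s x)"
    and "(\<lambda>y. trans_prob Qpre T s x s y * phi s y / phi s x) = dirac x"
proof -
  show "fwd_sol Qh T s (\<lambda>t y. trans_prob Qpre T s x t y * phi t y / phi s x)"
    using fwd_sol_Qh_mult_phi[OF s fwd_sol_scale[OF pre.trans_prob_fwd_sol[OF s], of "1 / phi s x"]]
    by simp
  show "(\<lambda>y. trans_prob Qpre T s x s y * phi s y / phi s x) = dirac x"
    using phi_pos[OF s, of x] by (auto simp: pre.trans_prob_initial[OF s] dirac_def)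
qed

lemma is_generator_Qh: "is_generator Qh T"
  unfolding is_generator_def
proof (intro conjI ballI allI impI)
  fix t and x y :: 'x assume t: "t \<in> {0..T}" and "x \<noteq> y"
  then show "0 \<le> Qh t x y"
    using pre.rate_nonneg[OF t] phi_pos[OF t, of x] phi_pos[OF t, of y] by (simp add: Qh_def)
next
  fix x y :: 'x
  show "continuous_on {0..T} (\<lambda>t. Qh t x y)"
    unfolding Qh_def using phi_pos
    by (cases "x = y") (auto intro!: continuous_intros pre.rate_continuous phi_continuous simp: less_imp_neq[THEN not_sym])
next
  fix s and x :: 'x assume s: "s \<in> {0..T}"
  show "\<exists>p. fwd_sol Qh T s p \<and> p s = dirac x"
    using fwd_sol_Qh_kernel[OF s, of x] by blast
next
  fix s t and p q :: "real \<Rightarrow> 'x \<Rightarrow> real"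
  assume s: "s \<in> {0..T}" and pq: "fwd_sol Qh T s p \<and> fwd_sol Qh T s q \<and> p s = q s" and t: "t \<in> {s..T}"
  have "(\<lambda>y. p t y / phi t y) = (\<lambda>y. q t y / phi t y)"
    by (rule pre.fwd_sol_unique[OF s fwd_sol_pre_div_phi[OF s] fwd_sol_pre_div_phi[OF s] _ t]) (use pq in auto)
  then show "p t = q t"
    using phi_pos[of t] s t by (auto simp: fun_eq_iff less_imp_neq[THEN not_sym])
qed (simp add: Qh_def)

sublocale h: ctmc_generator Qh T
  by (rule ctmc_generator.intro[OF is_generator_Qh])

lemma trans_prob_Qh:
  assumes "s \<in> {0..T}" "t \<in> {s..T}"
  shows "trans_prob Qh T s x t y = trans_prob Qpre T s x t y * phi t y / phi s x"
  using h.trans_prob_eq[OF assms(1) fwd_sol_Qh_kernel[OF assms(1)] assms(2)] by simp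

lemma log_phi_drift_eq_kl_gap:
  assumes t: "t \<in> {0..T}"
    and nonneg: "\<And>x y. x \<noteq> y \<Longrightarrow> 0 \<le> Q t x y"
    and ac: "\<And>x y. x \<noteq> y \<Longrightarrow> Qpre t x y = 0 \<Longrightarrow> Q t x y = 0"
  shows "(\<Sum>x\<in>UNIV. (\<Sum>y\<in>UNIV - {x}. Q t y x * p y - Q t x y * p x) * ln (phi t x)
        + 1 / phi t x * - (\<Sum>y\<in>UNIV - {x}. Qpre t x y * (phi t y - phi t x)) * p x)
    = (\<Sum>x\<in>UNIV. p x * (kl_rate Qpre Q t x - kl_rate Qh Q t x))"
proof -
  have "Q t x y * (ln (phi t y) - ln (phi t x)) - Qpre t x y * (phi t y - phi t x) / phi t x
      = kl_term (Qpre t x y) (Q t x y) - kl_term (Qh t x y) (Q t x y)" if "x \<noteq> y" for x y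
    using kl_term_change_of_reference[OF pre.rate_nonneg[OF t that] nonneg[OF that] _ phi_pos[OF t] phi_pos[OF t]]
      ac[OF that] that by (simp add: Qh_def)
  then have gap: "(\<Sum>y\<in>UNIV - {x}. Q t x y * (ln (phi t y) - ln (phi t x)))
      - (\<Sum>y\<in>UNIV - {x}. Qpre t x y * (phi t y - phi t x)) / phi t x
      = kl_rate Qpre Q t x - kl_rate Qh Q t x" for x
    unfolding kl_rate_eq_sum_kl_term sum_divide_distrib sum_subtractf[symmetric] by (intro sum.cong) auto
  have per_state: "p x * (\<Sum>y\<in>UNIV - {x}. Q t x y * (ln (phi t y) - ln (phi t x)))
      + 1 / phi t x * - (\<Sum>y\<in>UNIV - {x}. Qpre t x y * (phi t y - phi t x)) * p x
      = p x * (kl_rate Qpre Q t x - kl_rate Qh Q t x)" for x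
    unfolding gap[symmetric] by (simp add: right_diff_distrib divide_inverse mult_ac)
  have "(\<Sum>x\<in>UNIV. (\<Sum>y\<in>UNIV - {x}. Q t y x * p y - Q t x y * p x) * ln (phi t x)
        + 1 / phi t x * - (\<Sum>y\<in>UNIV - {x}. Qpre t x y * (phi t y - phi t x)) * p x)
      = (\<Sum>x\<in>UNIV. (\<Sum>y\<in>UNIV - {x}. Q t y x * p y - Q t x y * p x) * ln (phi t x))
        + (\<Sum>x\<in>UNIV. 1 / phi t x * - (\<Sum>y\<in>UNIV - {x}. Qpre t x y * (phi t y - phi t x)) * p x)"
    by (rule sum.distrib)
  also have "(\<Sum>x\<in>UNIV. (\<Sum>y\<in>UNIV - {x}. Q t y x * p y - Q t x y * p x) * ln (phi t x))
      = (\<Sum>x\<in>UNIV. p x * (\<Sum>y\<in>UNIV - {x}. Q t x y * (ln (phi t y) - ln (phi t x))))"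
    by (rule sum_flux_mult_eq)
  also have "\<dots> + (\<Sum>x\<in>UNIV. 1 / phi t x * - (\<Sum>y\<in>UNIV - {x}. Qpre t x y * (phi t y - phi t x)) * p x)
      = (\<Sum>x\<in>UNIV. p x * (kl_rate Qpre Q t x - kl_rate Qh Q t x))"
    unfolding sum.distrib[symmetric] per_state ..
  finally show ?thesis .
qed

lemma has_integral_kl_gap:
  assumes gen: "is_generator Q T" and ac: "abs_cont Qpre Q T" and s: "s \<in> {0..T}" and p: "fwd_sol Q T s p"
  shows "((\<lambda>t. \<Sum>x\<in>UNIV. p t x * (kl_rate Qpre Q t x - kl_rate Qh Q t x)) has_integral
      (\<Sum>x\<in>UNIV. p T x * ln (phi T x)) - (\<Sum>x\<in>UNIV. p s x * ln (phi s x))) {s..T}"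
proof (rule fundamental_theorem_of_calculus)
  interpret q: ctmc_generator Q T by (rule ctmc_generator.intro[OF gen])
  fix t assume t: "t \<in> {s..T}"
  then have t0: "t \<in> {0..T}" using s by auto
  have "((\<lambda>t. \<Sum>x\<in>UNIV. p t x * ln (phi t x)) has_real_derivative
      (\<Sum>x\<in>UNIV. (\<Sum>y\<in>UNIV - {x}. Q t y x * p t y - Q t x y * p t x) * ln (phi t x)
        + 1 / phi t x * - (\<Sum>y\<in>UNIV - {x}. Qpre t x y * (phi t y - phi t x)) * p t x))
      (at t within {s..T})"
    by (intro DERIV_sum DERIV_mult fwd_sol_deriv[OF p t]
        DERIV_chain2[OF DERIV_ln_divide phi_has_derivative[OF s t]] phi_pos[OF t0])
  then have "((\<lambda>t. \<Sum>x\<in>UNIV. p t x * ln (phi t x)) has_real_derivative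
      (\<Sum>x\<in>UNIV. p t x * (kl_rate Qpre Q t x - kl_rate Qh Q t x))) (at t within {s..T})"
    by (rule DERIV_cong[OF _ log_phi_drift_eq_kl_gap[where Q=Q and p="p t", OF t0 q.rate_nonneg[OF t0]
          ac[unfolded abs_cont_def, rule_format, OF t0]]])
  then show "((\<lambda>t. \<Sum>x\<in>UNIV. p t x * ln (phi t x)) has_vector_derivative
      (\<Sum>x\<in>UNIV. p t x * (kl_rate Qpre Q t x - kl_rate Qh Q t x))) (at t within {s..T})"
    by (simp add: has_real_derivative_iff_has_vector_derivative)
qed (use s in auto)

lemma kl_rate_Qh:
  assumes t: "t \<in> {0..T}"
  shows "kl_rate Qpre Qh t x = (\<Sum>y\<in>UNIV - {x}. Qpre t x y - Qh t x y + Qh t x y * ln (phi t y / phi t x))"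
  unfolding kl_rate_def
proof (intro sum.cong refl)
  fix y assume "y \<in> UNIV - {x}"
  then show "Qpre t x y - Qh t x y + Qh t x y * ln (Qh t x y / Qpre t x y)
      = Qpre t x y - Qh t x y + Qh t x y * ln (phi t y / phi t x)"
    using phi_pos[OF t, of x] by (cases "Qpre t x y = 0") (auto simp: Qh_def)
qed

lemma kl_rate_Qh_continuous: "continuous_on {0..T} (\<lambda>t. kl_rate Qpre Qh t x)"
proof -
  have "continuous_on {0..T} (\<lambda>t. \<Sum>y\<in>UNIV - {x}. Qpre t x y - Qh t x y + Qh t x y * ln (phi t y / phi t x))"
    using phi_pos
    by (intro continuous_intros pre.rate_continuous h.rate_continuous phi_continuous)
       (auto simp: less_imp_neq[THEN not_sym])
  then show ?thesis by (rule continuous_on_cong[THEN iffD1, rotated 2]) (auto simp: kl_rate_Qh)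
qed

lemma abs_cont_Qh: "abs_cont Qpre Qh T"
  unfolding abs_cont_def by (auto simp: Qh_def)

lemma set_integrable_kl_rate_Qh:
  assumes "s \<in> {0..T}"
  shows "set_integrable lborel {s..T} (\<lambda>t. \<Sum>y\<in>UNIV. trans_prob Qh T s x t y * kl_rate Qpre Qh t y)"
  using assms
  by (intro borel_integrable_atLeastAtMost' continuous_intros fwd_sol_continuous[OF h.trans_prob_fwd_sol]
      continuous_on_subset[OF kl_rate_Qh_continuous]) auto

lemma value_fn_Qh:
  assumes s: "s \<in> {0..T}"
  shows "value_fn r \<alpha> Qpre Qh T s x = \<alpha> * ln (phi s x)"
proof -
  let ?F = "\<lambda>t. \<Sum>y\<in>UNIV. trans_prob Qh T s x t y * kl_rate Qpre Qh t y"
  have "(?F has_integral (\<Sum>y\<in>UNIV. trans_prob Qh T s x T y * ln (phi T y))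
      - (\<Sum>y\<in>UNIV. trans_prob Qh T s x s y * ln (phi s y))) {s..T}"
    using has_integral_kl_gap[OF is_generator_Qh abs_cont_Qh s h.trans_prob_fwd_sol[OF s]]
    by (simp add: kl_rate_self)
  then have "(LINT t:{s..T}|lborel. ?F t) = (\<Sum>y\<in>UNIV. trans_prob Qh T s x T y * (r y / \<alpha>)) - ln (phi s x)"
    using set_borel_integral_eq_integral(2)[OF set_integrable_kl_rate_Qh[OF s]]
    by (simp add: integral_unique h.trans_prob_initial[OF s] sum_dirac_mult phi_terminal)
  then show ?thesis
    using \<alpha>_pos by (simp add: value_fn_def right_diff_distrib sum_distrib_left)
qed

lemma admissible_Qh: "admissible Qpre T x0 Qh"
  unfolding admissible_def marginal_def
  using is_generator_Qh abs_cont_Qh set_integrable_kl_rate_Qh[of 0 x0] T_pos by simp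

lemma objective_Qh: "objective r \<alpha> Qpre T x0 Qh = \<alpha> * ln (phi 0 x0)"
  using value_fn_Qh[of 0 x0] T_pos by (simp add: objective_eq_value_fn)

lemma objective_kl_gap_has_integral:
  assumes adm: "admissible Qpre T x0 Q"
  shows "((\<lambda>t. \<Sum>x\<in>UNIV. marginal Q T x0 t x * kl_rate Qh Q t x) has_integral
      ln (phi 0 x0) - objective r \<alpha> Qpre T x0 Q / \<alpha>) {0..T}"
proof -
  have gen: "is_generator Q T" and ac: "abs_cont Qpre Q T"
    and int: "set_integrable lborel {0..T} (\<lambda>t. \<Sum>x\<in>UNIV. marginal Q T x0 t x * kl_rate Qpre Q t x)"
    using adm unfolding admissible_def by auto
  interpret q: ctmc_generator Q T by (rule ctmc_generator.intro[OF gen])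
  have T0: "0 \<in> {0..T}" using T_pos by simp
  let ?p = "trans_prob Q T 0 x0"
  let ?K = "\<lambda>t. \<Sum>x\<in>UNIV. ?p t x * kl_rate Qpre Q t x"
  have int': "set_integrable lborel {0..T} ?K" using int by (simp add: marginal_def)
  have "(?K has_integral (LINT t:{0..T}|lborel. ?K t)) {0..T}"
    unfolding set_borel_integral_eq_integral(2)[OF int']
    by (rule integrable_integral[OF set_borel_integral_eq_integral(1)[OF int']])
  moreover have "((\<lambda>t. \<Sum>x\<in>UNIV. ?p t x * (kl_rate Qpre Q t x - kl_rate Qh Q t x)) has_integral
      (\<Sum>x\<in>UNIV. ?p T x * (r x / \<alpha>)) - ln (phi 0 x0)) {0..T}"
    using has_integral_kl_gap[OF gen ac T0 q.trans_prob_fwd_sol[OF T0]]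
    by (simp add: q.trans_prob_initial[OF T0] sum_dirac_mult phi_terminal)
  ultimately have "((\<lambda>t. ?K t - (\<Sum>x\<in>UNIV. ?p t x * (kl_rate Qpre Q t x - kl_rate Qh Q t x))) has_integral
      (LINT t:{0..T}|lborel. ?K t) - ((\<Sum>x\<in>UNIV. ?p T x * (r x / \<alpha>)) - ln (phi 0 x0))) {0..T}"
    by (rule has_integral_diff)
  then have "((\<lambda>t. \<Sum>x\<in>UNIV. ?p t x * kl_rate Qh Q t x) has_integral
      (LINT t:{0..T}|lborel. ?K t) - ((\<Sum>x\<in>UNIV. ?p T x * (r x / \<alpha>)) - ln (phi 0 x0))) {0..T}"
    by (simp add: right_diff_distrib sum_subtractf)
  moreover have "(LINT t:{0..T}|lborel. ?K t) - ((\<Sum>x\<in>UNIV. ?p T x * (r x / \<alpha>)) - ln (phi 0 x0))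
      = ln (phi 0 x0) - objective r \<alpha> Qpre T x0 Q / \<alpha>"
    using \<alpha>_pos by (simp add: objective_def marginal_def sum_divide_distrib diff_divide_distrib)
  ultimately show ?thesis
    unfolding marginal_def by (simp only:)
qed

end

section \<open>Optimal generators\<close>

locale optimal_control = kl_control Qpre T \<alpha> r
  for Qpre :: "real \<Rightarrow> 'x::finite \<Rightarrow> 'x \<Rightarrow> real" and T \<alpha> r +
  fixes x0 :: 'x and Qstar :: "real \<Rightarrow> 'x \<Rightarrow> 'x \<Rightarrow> real"
  assumes admissible_Qstar: "admissible Qpre T x0 Qstar"
    and optimal: "\<And>Q. admissible Qpre T x0 Q
      \<Longrightarrow> objective r \<alpha> Qpre T x0 Q \<le> objective r \<alpha> Qpre T x0 Qstar"
begin

sublocale st: ctmc_generator Qstar T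
  using admissible_Qstar by (simp add: admissible_def ctmc_generator.intro)

abbreviation pstar :: "real \<Rightarrow> 'x \<Rightarrow> real" where
  "pstar \<equiv> marginal Qstar T x0"

lemma pstar_eq: "pstar = trans_prob Qstar T 0 x0"
  by (simp add: marginal_def[abs_def])

lemma pstar_nonneg: "t \<in> {0..T} \<Longrightarrow> 0 \<le> pstar t x"
  unfolding pstar_eq using T_pos by (intro st.trans_prob_nonneg) auto

text \<open>Unlike the expected KL gap, this Hellinger minorant of it is continuous in time, so its vanishing
  integral forces it to vanish everywhere.\<close>
definition hellinger_gap :: "real \<Rightarrow> real" where
  "hellinger_gap t = (\<Sum>x\<in>UNIV. \<Sum>y\<in>UNIV - {x}. pstar t x * (sqrt (Qh t x y) - sqrt (Qstar t x y))\<^sup>2)"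

lemma hellinger_gap_le_kl_gap:
  assumes t: "t \<in> {0..T}"
  shows "hellinger_gap t \<le> (\<Sum>x\<in>UNIV. pstar t x * kl_rate Qh Qstar t x)"
  unfolding hellinger_gap_def kl_rate_eq_sum_kl_term sum_distrib_left
proof (intro sum_mono mult_left_mono pstar_nonneg[OF t])
  fix x y :: 'x assume "y \<in> UNIV - {x}"
  then have xy: "x \<noteq> y" by simp
  have "Qh t x y = 0 \<longrightarrow> Qstar t x y = 0"
    using admissible_Qstar phi_pos[OF t, of x] phi_pos[OF t, of y] t xy
    by (auto simp: admissible_def abs_cont_def Qh_def)
  then show "(sqrt (Qh t x y) - sqrt (Qstar t x y))\<^sup>2 \<le> kl_term (Qh t x y) (Qstar t x y)"
    by (rule kl_term_ge_hellinger[OF h.rate_nonneg[OF t xy] st.rate_nonneg[OF t xy]])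
qed

lemma hellinger_gap_zero:
  assumes t: "t \<in> {0..T}"
  shows "hellinger_gap t = 0"
proof (rule continuous_on_nonneg_integral_nonpos_imp_zero[OF _ _ _ T_pos t])
  show cont: "continuous_on {0..T} hellinger_gap"
    unfolding hellinger_gap_def pstar_eq using T_pos
    by (intro continuous_intros fwd_sol_continuous[OF st.trans_prob_fwd_sol] h.rate_continuous st.rate_continuous)
       auto
  show nonneg: "0 \<le> hellinger_gap s" if "s \<in> {0..T}" for s
    unfolding hellinger_gap_def using pstar_nonneg[OF that] by (intro sum_nonneg mult_nonneg_nonneg) auto
  let ?G = "\<lambda>t. \<Sum>x\<in>UNIV. pstar t x * kl_rate Qh Qstar t x"
  have G: "(?G has_integral ln (phi 0 x0) - objective r \<alpha> Qpre T x0 Qstar / \<alpha>) {0..T}"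
    by (rule objective_kl_gap_has_integral[OF admissible_Qstar])
  have "\<alpha> * ln (phi 0 x0) \<le> objective r \<alpha> Qpre T x0 Qstar"
    using optimal[OF admissible_Qh] objective_Qh by simp
  then have "ln (phi 0 x0) - objective r \<alpha> Qpre T x0 Qstar / \<alpha> \<le> 0"
    using \<alpha>_pos by (simp add: field_simps)
  moreover have "integral {0..T} hellinger_gap \<le> integral {0..T} ?G"
    by (rule integral_le[OF integrable_continuous_real[OF cont] has_integral_integrable[OF G]
          hellinger_gap_le_kl_gap])
  ultimately show "integral {0..T} hellinger_gap \<le> 0"
    using G by (simp add: integral_unique)
qed

lemma optimal_rate_eq_Qh:
  assumes t: "t \<in> {0..T}" and xy: "x \<noteq> y" and pos: "0 < pstar t x"
  shows "Qstar t x y = Qh t x y"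
proof -
  have nonneg: "0 \<le> pstar t x' * (sqrt (Qh t x' y') - sqrt (Qstar t x' y'))\<^sup>2" for x' y'
    using pstar_nonneg[OF t] by simp
  have "(\<Sum>y\<in>UNIV - {x}. pstar t x * (sqrt (Qh t x y) - sqrt (Qstar t x y))\<^sup>2) = 0"
    using hellinger_gap_zero[OF t] nonneg unfolding hellinger_gap_def
    by (subst (asm) sum_nonneg_eq_0_iff) (auto intro: sum_nonneg)
  then have "pstar t x * (sqrt (Qh t x y) - sqrt (Qstar t x y))\<^sup>2 = 0"
    using nonneg xy by (subst (asm) sum_nonneg_eq_0_iff) auto
  then show ?thesis using pos by simp
qed

lemma fwd_sol_Qh_on_support:
  assumes s: "s \<in> {0..T}" and q: "fwd_sol Qstar T s q"
    and support: "\<And>t z. t \<in> {s..T} \<Longrightarrow> q t z \<noteq> 0 \<Longrightarrow> 0 < pstar t z"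
  shows "fwd_sol Qh T s q"
proof (rule fwd_sol_transfer[OF q])
  fix t and z w :: 'x assume t: "t \<in> {s..T}" and zw: "z \<noteq> w"
  show "Qstar t z w * q t z = Qh t z w * q t z"
  proof (cases "q t z = 0")
    case False
    then show ?thesis using optimal_rate_eq_Qh[OF _ zw support[OF t False]] s t by simp
  qed simp
qed

lemma pstar_eq_tilted:
  assumes t: "t \<in> {0..T}"
  shows "pstar t y = marginal Qpre T x0 t y * phi t y / phi 0 x0"
proof -
  have T0: "0 \<in> {0..T}" using T_pos by simp
  have "fwd_sol Qh T 0 pstar"
  proof (rule fwd_sol_Qh_on_support[OF T0])
    show "fwd_sol Qstar T 0 pstar" unfolding pstar_eq by (rule st.trans_prob_fwd_sol[OF T0])
    show "0 < pstar s z" if "s \<in> {0..T}" "pstar s z \<noteq> 0" for s z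
      using pstar_nonneg[OF that(1), of z] that(2) by simp
  qed
  then have "pstar t y = trans_prob Qh T 0 x0 t y"
    using h.trans_prob_eq[OF T0 _ _ t] st.trans_prob_initial[OF T0] by (simp add: pstar_eq)
  then show ?thesis using trans_prob_Qh[OF T0 t] by (simp add: marginal_def)
qed

lemma pstar_pos_of_trans_prob:
  assumes t: "t \<in> {0..T}" and pos: "0 < pstar t y" and s: "s \<in> {t..T}"
    and q: "trans_prob Qstar T t y s z \<noteq> 0"
  shows "0 < pstar s z"
proof -
  have "0 < trans_prob Qstar T t y s z" using st.trans_prob_nonneg[OF t s, of y z] q by simp
  moreover have "pstar t y * trans_prob Qstar T t y s z \<le> pstar s z"
  proof -
    have "fwd_sol Qstar T t pstar"
      using fwd_sol_mono[OF st.trans_prob_fwd_sol[of 0 x0]] t T_pos by (simp add: pstar_eq)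
    then have "pstar s z = (\<Sum>w\<in>UNIV. pstar t w * trans_prob Qstar T t w s z)"
      by (rule st.fwd_sol_superposition[OF t _ s])
    then show ?thesis
      using pstar_nonneg[OF t] st.trans_prob_nonneg[OF t s]
      by (auto intro: member_le_sum[where f="\<lambda>w. pstar t w * trans_prob Qstar T t w s z"])
  qed
  ultimately show ?thesis using pos by (meson mult_pos_pos order_less_le_trans)
qed

lemma value_fn_Qstar:
  assumes t: "t \<in> {0..T}" and pos: "0 < pstar t y"
  shows "value_fn r \<alpha> Qpre Qstar T t y = \<alpha> * ln (phi t y)"
proof -
  let ?q = "trans_prob Qstar T t y"
  note support = pstar_pos_of_trans_prob[OF t pos]
  have q_eq: "?q s z = trans_prob Qh T t y s z" if "s \<in> {t..T}" for s z
    using h.trans_prob_eq[OF t fwd_sol_Qh_on_support[OF t st.trans_prob_fwd_sol[OF t] support]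
        st.trans_prob_initial[OF t] that] by simp
  have kl_eq: "?q s z * kl_rate Qpre Qstar s z = trans_prob Qh T t y s z * kl_rate Qpre Qh s z"
    if s: "s \<in> {t..T}" for s z
  proof (cases "?q s z = 0")
    case False
    have "s \<in> {0..T}" using s t by simp
    then have "kl_rate Qpre Qstar s z = kl_rate Qpre Qh s z"
      unfolding kl_rate_def using optimal_rate_eq_Qh support[OF s False] by (intro sum.cong) auto
    then show ?thesis using q_eq[OF s] by simp
  qed (use q_eq[OF s] in simp)
  have "value_fn r \<alpha> Qpre Qstar T t y = value_fn r \<alpha> Qpre Qh T t y"
    unfolding value_fn_def using t kl_eq q_eq[of T]
    by (simp add: set_lebesgue_integral_cong)
  then show ?thesis using value_fn_Qh[OF t] by simp
qed

lemma pstar_eq_exp_value_fn: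
  assumes t: "t \<in> {0..T}"
  shows "pstar t x = 1 / phi 0 x0 * exp (value_fn r \<alpha> Qpre Qstar T t x / \<alpha>) * marginal Qpre T x0 t x"
proof (cases "pstar t x = 0")
  case True
  then show ?thesis using pstar_eq_tilted[OF t, of x] phi_pos[OF t, of x] phi_pos[of 0 x0] T_pos by simp
next
  case False
  then have "0 < pstar t x" using pstar_nonneg[OF t, of x] by simp
  then have "exp (value_fn r \<alpha> Qpre Qstar T t x / \<alpha>) = phi t x"
    using value_fn_Qstar[OF t] \<alpha>_pos phi_pos[OF t, of x] by simp
  then show ?thesis using pstar_eq_tilted[OF t, of x] by simp
qed

end

theorem theorem4:
  fixes T \<alpha> :: real
    and r :: "'x::finite \<Rightarrow> real"
    and x0 :: 'x
    and Qpre Qstar :: "real \<Rightarrow> 'x \<Rightarrow> 'x \<Rightarrow> real"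
  assumes "T > 0" and "\<alpha> > 0"
    and "is_generator Qpre T"
    and "admissible Qpre T x0 Qstar"
    and "\<forall>Q. admissible Qpre T x0 Q \<longrightarrow> objective r \<alpha> Qpre T x0 Q \<le> objective r \<alpha> Qpre T x0 Qstar"
  shows "(\<forall>t\<in>{0..T}. \<exists>c>0. \<forall>x.
           marginal Qstar T x0 t x = c * exp (value_fn r \<alpha> Qpre Qstar T t x / \<alpha>) * marginal Qpre T x0 t x)
       \<and> (\<exists>c>0. \<forall>x. marginal Qstar T x0 T x = c * exp (r x / \<alpha>) * marginal Qpre T x0 T x)"
proof -
  interpret optimal_control Qpre T \<alpha> r x0 Qstar
    by unfold_locales (use assms in auto)
  have c: "0 < 1 / phi 0 x0" using phi_pos[of 0 x0] T_pos by simp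
  have "pstar T x = 1 / phi 0 x0 * exp (r x / \<alpha>) * marginal Qpre T x0 T x" for x
    using pstar_eq_tilted[of T x] T_pos by (simp add: phi_terminal)
  then show ?thesis using c pstar_eq_exp_value_fn by blast
qed

end
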